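(* Let $d\ge0$ and $a$ be integers and $r=-(a+d)$. The substitution $H(t)\mapsto \varphi(x):=x^dH(1-x)$ is a linear isomorphism from the space of formal Laurent series $H(t)$ over $\mathbb{K}$ around $t=1$ of pole order at most $d$ satisfying $H(t^{-1})=(-1)^dt^{-a}H(t)$ onto $\mathcal{F}_r$. Moreover, with respect to the Cauchy product of formal power series, $\mathcal{F}_r\cdot\mathcal{F}_s\subseteq\mathcal{F}_{r+s}$ for all $r,s\in\mathbb{Z}$ and $1\in\mathcal{F}_0$, so that $\mathcal{F}=\bigoplus_{r\in\mathbb{Z}}\mathcal{F}_r$ is a $\mathbb{Z}$-graded algebra.
   Context: $\mathbb{K}$ is one of $\mathbb{Q},\mathbb{R},\mathbb{C}$. For $r\in\mathbb{Z}$, $\mathcal{F}_r$ is the space of formal power series $\varphi(x)\in\mathbb{K}[[x]]$ satisfying $\varphi(x/(x-1))=(1-x)^r\varphi(x)$ (the composition is well defined since $x/(x-1)=-x-x^2-\cdots$ has zero constant term). $\mathcal{F}=\bigoplus_{r}\mathcal{F}_r$ is the $\mathbb{Z}$-graded vector space with homogeneous components $\mathcal{F}_r$, the product of homogeneous elements being the Cauchy product. The functional equation $H(t^{-1})=(-1)^dt^{-a}H(t)$ is understood as an identity of formal Laurent series in $u=1-t$ (with $t^{-1}=\sum_{j\ge0}u^j$, $1-t^{-1}=-u/(1-u)$, $t^{-a}=(1-u)^{-a}$). *)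

theory Defs
  imports "HOL-Computational_Algebra.Formal_Laurent_Series"
begin

text \<open>The substitution x -> x/(x-1) (equivalently u -> -u/(1-u) = 1 - t^{-1} with u = 1 - t).\<close>
definition sigma_subst :: "'a::field fps" where
  "sigma_subst = fps_X / (fps_X - 1)"

definition F_space :: "int \<Rightarrow> 'a::field fps set" where
  "F_space r = {\<phi>. fps_to_fls (fps_compose \<phi> sigma_subst)
                     = (1 - fls_X) powi r * fps_to_fls \<phi>}"

text \<open>Laurent series H in u = 1 - t with pole order at most d satisfying
  H(t^{-1}) = (-1)^d t^{-a} H(t), where t^{-1} corresponds to 1 - t^{-1} = -u/(1-u)
  and t^{-a} = (1-u)^{-a}.\<close>
definition H_space :: "int \<Rightarrow> int \<Rightarrow> 'a::field fls set" where
  "H_space d a = {H. - d \<le> fls_subdegree H \<and>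
      fls_compose_fps H sigma_subst = (-1) powi d * (1 - fls_X) powi (- a) * H}"

text \<open>The map H(t) |-> x^d H(1-x); with u = 1 - t = x this is multiplication by x^d.\<close>
definition subst_map :: "int \<Rightarrow> 'a::field fls \<Rightarrow> 'a fps" where
  "subst_map d H = fls_regpart (fls_X_intpow d * H)"

end

theory Submission
  imports Defs
begin

text \<open>Composition with \<open>\<sigma> = x/(x-1)\<close> is a ring endomorphism of formal Laurent series
  sending \<open>x\<close> to \<open>-x(1-x)\<^sup>-\<^sup>1\<close>, hence \<open>x\<^sup>d\<close> to \<open>(-1)\<^sup>d x\<^sup>d (1-x)\<^sup>-\<^sup>d\<close>. Multiplying the
  functional equation of \<open>H\<close> by \<open>x\<^sup>d\<close> therefore turns it into the defining equation of
  \<open>\<F>\<^sub>r\<close> with \<open>r = -(a+d)\<close>, and the pole-order bound on \<open>H\<close> says exactly that \<open>x\<^sup>d H\<close> is a power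
  series, so \<open>\<phi> \<mapsto> x\<^sup>-\<^sup>d \<phi>\<close> is the inverse map. Multiplicativity of composition gives the grading.\<close>

lemma sigma_subst_times_X_minus_1: "(sigma_subst :: 'a::field fps) * (fps_X - 1) = fps_X"
proof -
  have unit: "(fps_X - 1 :: 'a fps) $ 0 \<noteq> 0" by simp
  show ?thesis unfolding sigma_subst_def
    using fps_divide_unit[OF unit, of fps_X] inverse_mult_eq_1[OF unit]
    by (simp add: mult.assoc)
qed

lemma sigma_subst_nonzero: "(sigma_subst :: 'a::field fps) \<noteq> 0"
  using sigma_subst_times_X_minus_1[where 'a='a] by (metis fps_X_neq_zero mult_zero_left)

lemma sigma_subst_nth_0 [simp]: "(sigma_subst :: 'a::field fps) $ 0 = 0"
  unfolding sigma_subst_def by (simp add: fps_divide_unit)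

lemma one_minus_fls_X_nonzero: "(1 - fls_X :: 'a::field fls) \<noteq> 0"
  by (metis fls_X_nth right_minus_eq fls_one_nth zero_neq_one)

lemma fps_to_fls_sigma_subst:
  "fps_to_fls (sigma_subst :: 'a::field fps) = - fls_X * (1 - fls_X) powi (-1)"
proof -
  have "fps_to_fls (sigma_subst :: 'a fps) * (fls_X - 1) = fls_X"
    using arg_cong[OF sigma_subst_times_X_minus_1, of fps_to_fls]
    by (simp add: fls_times_fps_to_fls)
  with one_minus_fls_X_nonzero[where 'a='a] show ?thesis
    by (simp add: power_int_minus field_simps)
qed

lemma fls_compose_sigma_subst_X_intpow:
  "fls_compose_fps (fls_X_intpow d) (sigma_subst :: 'a::field fps)
     = (-1) powi d * (1 - fls_X) powi (-d) * fls_X_intpow d"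
proof -
  have "fls_compose_fps (fls_X_intpow d) (sigma_subst :: 'a fps)
          = (- fls_X * (1 - fls_X) powi (-1)) powi d"
    by (simp add: fls_compose_fps_powi sigma_subst_nonzero fps_to_fls_sigma_subst
             flip: fls_X_power_int)
  also have "\<dots> = (-1) powi d * (1 - fls_X) powi (-d) * fls_X_intpow d"
    by (simp add: power_int_mult_distrib power_int_minus_left power_int_mult power_int_minus
        power_int_inverse flip: fls_X_power_int)
  finally show ?thesis .
qed

lemma F_space_iff:
  "\<phi> \<in> F_space r \<longleftrightarrow>
     fls_compose_fps (fps_to_fls \<phi>) sigma_subst = (1 - fls_X) powi r * fps_to_fls \<phi>"
  by (simp add: F_space_def sigma_subst_nonzero)

lemma fls_compose_sigma_subst_X_intpow_mult_iff:
  fixes H :: "'a::field fls" and d a :: int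
  shows "fls_compose_fps (fls_X_intpow d * H) sigma_subst
           = (1 - fls_X) powi (- (a + d)) * (fls_X_intpow d * H)
         \<longleftrightarrow> fls_compose_fps H sigma_subst = (-1) powi d * (1 - fls_X) powi (- a) * H"
    (is "?lhs \<longleftrightarrow> ?rhs")
proof -
  define C where "C = fls_compose_fps H sigma_subst"
  define B :: "'a fls" where "B = (1 - fls_X) powi (-d) * fls_X_intpow d"
  define R :: "'a fls" where "R = (1 - fls_X) powi (-a) * H"
  define e :: "'a fls" where "e = (-1) powi d"
  txt \<open>Both sides share the factor \<open>B = x\<^sup>d (1-x)\<^sup>-\<^sup>d\<close>; after cancelling it the sign
    \<open>e = (-1)\<^sup>d\<close> moves across since \<open>e\<^sup>2 = 1\<close>.\<close>
  have "B \<noteq> 0"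
    unfolding B_def using one_minus_fls_X_nonzero[where 'a='a] by simp
  have "e * e = 1"
    unfolding e_def by (simp flip: power_int_mult_distrib)
  have "fls_compose_fps (fls_X_intpow d * H) sigma_subst = B * (e * C)"
    by (simp add: C_def B_def e_def fls_compose_fps_mult sigma_subst_nonzero
        fls_compose_sigma_subst_X_intpow algebra_simps)
  moreover have "(1 - fls_X) powi (- (a + d)) * (fls_X_intpow d * H) = B * R"
    using one_minus_fls_X_nonzero[where 'a='a]
    by (simp add: B_def R_def power_int_diff power_int_minus field_simps)
  ultimately have "?lhs \<longleftrightarrow> B * (e * C) = B * R"
    by simp
  also have "\<dots> \<longleftrightarrow> e * C = R"
    using \<open>B \<noteq> 0\<close> by simp
  also have "\<dots> \<longleftrightarrow> C = e * R"
    using \<open>e * e = 1\<close> by (metis mult.assoc mult_1_left)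
  finally show ?thesis
    by (simp add: C_def R_def e_def mult.assoc)
qed

lemma fps_to_fls_subst_map:
  assumes "- d \<le> fls_subdegree H"
  shows "fps_to_fls (subst_map d H) = fls_X_intpow d * (H :: 'a::field fls)"
proof -
  have "0 \<le> fls_subdegree (fls_X_intpow d * H)"
    using assms by (cases "H = 0") (simp_all add: fls_subdegree_mult_fls_X_intpow)
  then show ?thesis
    unfolding subst_map_def by simp
qed

lemma fls_X_intpow_mult_cancel:
  "fls_X_intpow (- n) * (fls_X_intpow n * f) = (f :: 'a::field fls)"
  "fls_X_intpow n * (fls_X_intpow (- n) * f) = f"
  using fls_X_intpow_times_fls_X_intpow[of n "- n", where 'a='a]
    fls_X_intpow_times_fls_X_intpow[of "- n" n, where 'a='a]
  by (simp_all add: mult.assoc[symmetric])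

lemma subst_map_X_intpow_mult:
  "subst_map d (fls_X_intpow (- d) * fps_to_fls \<phi>) = (\<phi> :: 'a::field fps)"
  by (simp only: subst_map_def fls_X_intpow_mult_cancel fls_regpart_fps_trivial)

lemma fls_subdegree_X_intpow_mult_fps_to_fls:
  assumes "0 \<le> d"
  shows "- d \<le> fls_subdegree (fls_X_intpow (- d) * fps_to_fls (\<phi> :: 'a::field fps))"
proof (cases "\<phi> = 0")
  case False
  then have "fls_subdegree (fls_X_intpow (- d) * fps_to_fls \<phi>) = fls_subdegree (fps_to_fls \<phi>) - d"
    by (subst fls_subdegree_mult_fls_X_intpow) simp_all
  then show ?thesis
    using fls_subdegree_fls_to_fps_gt0[of \<phi>] by linarith
qed (simp add: assms)

lemma subst_map_in_F_space_iff:
  assumes "- d \<le> fls_subdegree H"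
  shows "subst_map d H \<in> F_space (- (a + d))
         \<longleftrightarrow> fls_compose_fps H sigma_subst = (-1) powi d * (1 - fls_X) powi (- a) * (H :: 'a::field fls)"
  unfolding F_space_iff fps_to_fls_subst_map[OF assms]
  by (rule fls_compose_sigma_subst_X_intpow_mult_iff)

lemma H_space_iff_subst_map:
  "H \<in> H_space d a \<longleftrightarrow> - d \<le> fls_subdegree H \<and> subst_map d H \<in> F_space (- (a + d))"
  using subst_map_in_F_space_iff unfolding H_space_def by blast

lemma X_intpow_mult_fps_to_fls_in_H_space:
  assumes "0 \<le> d" and "\<phi> \<in> F_space (- (a + d))"
  shows "fls_X_intpow (- d) * fps_to_fls (\<phi> :: 'a::field fps) \<in> H_space d a"
  using fls_subdegree_X_intpow_mult_fps_to_fls[OF assms(1), of \<phi>] assms(2)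
  by (simp only: H_space_iff_subst_map subst_map_X_intpow_mult)

lemma bij_betw_subst_map:
  assumes "0 \<le> d"
  shows "bij_betw (subst_map d :: 'a::field fls \<Rightarrow> 'a fps) (H_space d a) (F_space (- (a + d)))"
proof (rule bij_betw_byWitness[where f' = "\<lambda>\<phi>. fls_X_intpow (- d) * fps_to_fls \<phi>"])
  show "\<forall>H\<in>H_space d a. fls_X_intpow (- d) * fps_to_fls (subst_map d H) = H"
    by (metis (no_types, lifting) H_space_def mem_Collect_eq fps_to_fls_subst_map
        fls_X_intpow_mult_cancel(1))
  show "\<forall>\<phi>\<in>F_space (- (a + d)). subst_map d (fls_X_intpow (- d) * fps_to_fls \<phi>) = \<phi>"
    using subst_map_X_intpow_mult by blast
  show "subst_map d ` H_space d a \<subseteq> F_space (- (a + d))"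
    using H_space_iff_subst_map by blast
  show "(\<lambda>\<phi>. fls_X_intpow (- d) * fps_to_fls \<phi>) ` F_space (- (a + d)) \<subseteq> H_space d a"
    using X_intpow_mult_fps_to_fls_in_H_space[OF assms] by blast
qed

lemma subst_map_add: "subst_map d (H + G) = subst_map d H + subst_map d (G :: 'a::field fls)"
  by (simp add: subst_map_def distrib_left)

lemma subst_map_fls_const_mult:
  "subst_map d (fls_const c * H) = fps_const c * subst_map d (H :: 'a::field fls)"
proof -
  have "fls_regpart (fls_const c * F) = fps_const c * fls_regpart F" for F :: "'a fls"
    by (intro fps_ext) simp
  then show ?thesis
    unfolding subst_map_def by (metis mult.left_commute)
qed

lemma F_space_mult:
  assumes "\<phi> \<in> F_space r" and "\<psi> \<in> F_space s"
  shows "\<phi> * \<psi> \<in> F_space (r + s)"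
proof -
  have "fps_to_fls ((\<phi> * \<psi>) oo sigma_subst)
          = fps_to_fls (\<phi> oo sigma_subst) * fps_to_fls (\<psi> oo sigma_subst)"
    by (simp add: fps_compose_mult_distrib fls_times_fps_to_fls)
  also have "\<dots> = ((1 - fls_X) powi r * (1 - fls_X) powi s) * fps_to_fls (\<phi> * \<psi>)"
    using assms by (simp add: F_space_def fls_times_fps_to_fls algebra_simps)
  also have "(1 - fls_X) powi r * (1 - fls_X) powi s = ((1 - fls_X) powi (r + s) :: 'a fls)"
    using one_minus_fls_X_nonzero[where 'a='a] by (simp add: power_int_add)
  finally show ?thesis
    by (simp add: F_space_def)
qed

lemma one_in_F_space_0: "1 \<in> F_space 0"
  by (simp add: F_space_def)

theorem proposition3p2:
  fixes d a r :: int
  assumes "0 \<le> d" and "r = - (a + d)"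
  shows "bij_betw (subst_map d :: 'a::field_char_0 fls \<Rightarrow> 'a fps) (H_space d a) (F_space r)
    \<and> (\<forall>H G. subst_map d (H + G) = (subst_map d H + subst_map d G :: 'a fps))
    \<and> (\<forall>(c::'a) H. subst_map d (fls_const c * H) = fps_const c * subst_map d H)
    \<and> (\<forall>(s::int) (s'::int) (\<phi>::'a fps) \<psi>. \<phi> \<in> F_space s \<longrightarrow> \<psi> \<in> F_space s'
          \<longrightarrow> \<phi> * \<psi> \<in> F_space (s + s'))
    \<and> (1::'a fps) \<in> F_space 0"
  using bij_betw_subst_map[OF assms(1), of a] assms(2)
  by (simp add: subst_map_add subst_map_fls_const_mult F_space_mult one_in_F_space_0)

end
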